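(* Let $M_1,M_2,M_3:\mathcal{L}_2^n\to\mathcal{L}_2^n$ be linear bounded invertible operators. For all $u,w\in\mathcal{L}_{2+}^n$ and all $v\in\mathcal{L}_{2+}^n\setminus\{0\}$, $$\theta_{M_1,M_3}(u,w)\le\theta_{M_1,M_2}(u,v)+\theta_{M_2,M_3}(v,w).$$
   Context: $\mathcal{L}_2^n$ is the Hilbert space of measurable $u:\mathbb{R}\to\mathbb{R}^n$ with $\|u\|_2^2=\int|u(t)|^2dt<\infty$ and inner product $\langle u,v\rangle=\int u(t)^Tv(t)\,dt$; $\mathcal{L}_{2+}=\{u\in\mathcal{L}_2:u(t)=0\ \text{for}\ t<0\}$. For linear bounded invertible $M_1,M_2$ on $\mathcal{L}_2$ and $u,v\in\mathcal{L}_{2+}$, the generalized angle $\theta_{M_1,M_2}(u,v)\in[0,\pi]$ is defined by $\cos\theta_{M_1,M_2}(u,v)=\langle M_1u,M_2v\rangle/(\|M_1u\|_2\|M_2v\|_2)$ if $u,v\ne0$, and $\theta_{M_1,M_2}(u,v)=0$ otherwise. *)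

theory Defs
  imports "HOL-Analysis.Analysis"
begin

text \<open>Elements of L2^n are represented by (measurable, square integrable) functions
  real => real^'n; equality in L2 is equality almost everywhere.\<close>

definition L2 :: "(real \<Rightarrow> real^'n) set" where
  "L2 = {u. u \<in> borel_measurable lborel \<and> integrable lborel (\<lambda>t. (norm (u t))\<^sup>2)}"

definition L2_inner :: "(real \<Rightarrow> real^'n) \<Rightarrow> (real \<Rightarrow> real^'n) \<Rightarrow> real" where
  "L2_inner u v = (LINT t|lborel. u t \<bullet> v t)"

definition L2_norm :: "(real \<Rightarrow> real^'n) \<Rightarrow> real" where
  "L2_norm u = sqrt (L2_inner u u)"

definition ae_eq :: "(real \<Rightarrow> real^'n) \<Rightarrow> (real \<Rightarrow> real^'n) \<Rightarrow> bool" where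
  "ae_eq u v \<longleftrightarrow> (AE t in lborel. u t = v t)"

definition L2plus :: "(real \<Rightarrow> real^'n) set" where
  "L2plus = {u \<in> L2. AE t in lborel. t < 0 \<longrightarrow> u t = 0}"

definition L2_op :: "((real \<Rightarrow> real^'n) \<Rightarrow> (real \<Rightarrow> real^'n)) \<Rightarrow> bool" where
  "L2_op M \<longleftrightarrow> (\<forall>u\<in>L2. M u \<in> L2) \<and> (\<forall>u\<in>L2. \<forall>v\<in>L2. ae_eq u v \<longrightarrow> ae_eq (M u) (M v))"

definition lin_bdd_inv_op :: "((real \<Rightarrow> real^'n) \<Rightarrow> (real \<Rightarrow> real^'n)) \<Rightarrow> bool" where
  "lin_bdd_inv_op M \<longleftrightarrow>
     L2_op M
   \<and> (\<forall>u\<in>L2. \<forall>v\<in>L2. \<forall>a b::real.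
        ae_eq (M (\<lambda>t. a *\<^sub>R u t + b *\<^sub>R v t)) (\<lambda>t. a *\<^sub>R M u t + b *\<^sub>R M v t))
   \<and> (\<exists>C. \<forall>u\<in>L2. L2_norm (M u) \<le> C * L2_norm u)
   \<and> (\<exists>N. L2_op N \<and> (\<forall>u\<in>L2. ae_eq (N (M u)) u \<and> ae_eq (M (N u)) u))"

text \<open>Generalized angle theta_{M1,M2}(u,v); u = 0 in L2 means norm u = 0.\<close>
definition gen_angle ::
  "((real \<Rightarrow> real^'n) \<Rightarrow> (real \<Rightarrow> real^'n)) \<Rightarrow> ((real \<Rightarrow> real^'n) \<Rightarrow> (real \<Rightarrow> real^'n))
   \<Rightarrow> (real \<Rightarrow> real^'n) \<Rightarrow> (real \<Rightarrow> real^'n) \<Rightarrow> real" where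
  "gen_angle M1 M2 u v =
     (if L2_norm u = 0 \<or> L2_norm v = 0 then 0
      else arccos (L2_inner (M1 u) (M2 v) / (L2_norm (M1 u) * L2_norm (M2 v))))"

end

theory Submission
  imports Defs
begin

text \<open>The generalized angles are ordinary angles between M1 u, M2 v and M3 w in L2, and
  angles between vectors x, y, z satisfy the triangle inequality because their Gram matrix is
  positive semidefinite. With unit diagonal, Cauchy-Schwarz for the components of x and z
  orthogonal to y gives (x, z) \<ge> (x, y) (y, z) - sin \<angle>(x, y) sin \<angle>(y, z)
  = cos (\<angle>(x, y) + \<angle>(y, z)), and arccos is decreasing.\<close>

lemma nonneg_quadratic_form_coeffs:
  fixes A B C :: real
  assumes nonneg: "\<And>s k. 0 \<le> s^2 * A + 2 * s * k * B + k^2 * C"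
  shows "0 \<le> A" "0 \<le> C" "B^2 \<le> A * C"
proof -
  show A: "0 \<le> A" using nonneg[of 1 0] by simp
  show "0 \<le> C" using nonneg[of 0 1] by simp
  show "B^2 \<le> A * C"
  proof (cases "A = 0")
    case True
    show ?thesis
    proof (rule ccontr)
      assume "\<not> B^2 \<le> A * C"
      then have "B \<noteq> 0" using True by simp
      have "0 \<le> (-(C + 1) / (2 * B))^2 * A + 2 * (-(C + 1) / (2 * B)) * 1 * B + 1^2 * C"
        by (rule nonneg)
      also have "\<dots> = -1" using True \<open>B \<noteq> 0\<close> by (simp add: field_simps)
      finally show False by simp
    qed
  next
    case False
    have "0 \<le> (-B)^2 * A + 2 * (-B) * A * B + A^2 * C" by (rule nonneg)
    also have "\<dots> = A * (A * C - B^2)" by (simp add: power2_eq_square algebra_simps)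
    finally show ?thesis using A False by (simp add: zero_le_mult_iff)
  qed
qed

lemma abs_divide_sqrt_mult_le_1:
  fixes A B C :: real
  assumes "0 \<le> A" "0 \<le> C" "B^2 \<le> A * C"
  shows "\<bar>B / (sqrt A * sqrt C)\<bar> \<le> 1"
proof -
  have "\<bar>B\<bar> \<le> sqrt A * sqrt C"
    using real_sqrt_le_mono[OF assms(3)] by (simp add: real_sqrt_mult)
  then show ?thesis
    using assms(1,2) by (cases "sqrt A * sqrt C = 0") (simp_all add: abs_divide)
qed

lemma arccos_le_add_arccos:
  fixes p q r :: real
  assumes p: "\<bar>p\<bar> \<le> 1" and q: "\<bar>q\<bar> \<le> 1" and r: "\<bar>r\<bar> \<le> 1"
    and r_ge: "p * q - sqrt (1 - p^2) * sqrt (1 - q^2) \<le> r"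
  shows "arccos r \<le> arccos p + arccos q"
proof (cases "arccos p + arccos q \<le> pi")
  case True
  have cos_sum: "cos (arccos p + arccos q) = p * q - sqrt (1 - p^2) * sqrt (1 - q^2)"
    using p q by (simp add: cos_add sin_arccos abs_le_iff)
  have "arccos r \<le> arccos (cos (arccos p + arccos q))"
    using r r_ge cos_ge_minus_one[of "arccos p + arccos q"] unfolding cos_sum
    by (intro arccos_le_arccos) (auto simp: abs_le_iff)
  also have "\<dots> = arccos p + arccos q"
    using True p q by (intro arccos_cos) (auto simp: abs_le_iff intro!: add_nonneg_nonneg arccos_lbound)
  finally show ?thesis .
next
  case False
  then show ?thesis using arccos_ubound[of r] r by (simp add: abs_le_iff)
qed

lemma unit_gram_arccos_triangle:
  fixes p q r :: real
  assumes psd: "\<And>s t k. 0 \<le> s^2 + t^2 + k^2 + 2 * s * t * p + 2 * t * k * q + 2 * s * k * r"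
  shows "arccos r \<le> arccos p + arccos q"
proof (rule arccos_le_add_arccos)
  have "p^2 \<le> 1" "q^2 \<le> 1" "r^2 \<le> 1"
    using nonneg_quadratic_form_coeffs(3)[of 1 p 1] psd[of _ _ 0]
      nonneg_quadratic_form_coeffs(3)[of 1 q 1] psd[of 0]
      nonneg_quadratic_form_coeffs(3)[of 1 r 1] psd[of _ 0]
    by (simp_all add: algebra_simps)
  then show "\<bar>p\<bar> \<le> 1" "\<bar>q\<bar> \<le> 1" "\<bar>r\<bar> \<le> 1"
    by (simp_all add: abs_square_le_1)
  txt \<open>Choosing t = -(p s + q k) projects onto the orthogonal complement of the middle vector.\<close>
  have "(r - p * q)^2 \<le> (1 - p^2) * (1 - q^2)"
  proof (rule nonneg_quadratic_form_coeffs(3))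
    fix s k
    have "0 \<le> s^2 + (-(p * s + q * k))^2 + k^2 + 2 * s * (-(p * s + q * k)) * p
        + 2 * (-(p * s + q * k)) * k * q + 2 * s * k * r"
      by (rule psd)
    also have "\<dots> = s^2 * (1 - p^2) + 2 * s * k * (r - p * q) + k^2 * (1 - q^2)"
      by (simp add: power2_eq_square algebra_simps)
    finally show "0 \<le> s^2 * (1 - p^2) + 2 * s * k * (r - p * q) + k^2 * (1 - q^2)" .
  qed
  then have "\<bar>r - p * q\<bar> \<le> sqrt (1 - p^2) * sqrt (1 - q^2)"
    using real_sqrt_le_mono by (fastforce simp: real_sqrt_mult)
  then show "p * q - sqrt (1 - p^2) * sqrt (1 - q^2) \<le> r" by linarith
qed

lemma gram_arccos_triangle:
  fixes a b c p q r :: real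
  assumes psd: "\<And>s t k. 0 \<le> s^2 * a + t^2 * b + k^2 * c + 2 * s * t * p + 2 * t * k * q + 2 * s * k * r"
  shows "arccos (r / (sqrt a * sqrt c)) \<le> arccos (p / (sqrt a * sqrt b)) + arccos (q / (sqrt b * sqrt c))"
proof -
  have ab: "0 \<le> a" "0 \<le> b" "p^2 \<le> a * b"
    using nonneg_quadratic_form_coeffs[of a p b] psd[of _ _ 0] by (simp_all add: algebra_simps)
  have bc: "0 \<le> c" "q^2 \<le> b * c"
    using nonneg_quadratic_form_coeffs[of b q c] psd[of 0] by (simp_all add: algebra_simps)
  have ac: "r^2 \<le> a * c"
    using nonneg_quadratic_form_coeffs[of a r c] psd[of _ 0] by (simp_all add: algebra_simps)
  show ?thesis
  proof (cases "a = 0 \<or> b = 0 \<or> c = 0")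
    case True
    then show ?thesis
      using abs_divide_sqrt_mult_le_1[OF ab, unfolded abs_le_iff]
        abs_divide_sqrt_mult_le_1[OF ab(2) bc, unfolded abs_le_iff]
        abs_divide_sqrt_mult_le_1[OF ab(1) bc(1) ac, unfolded abs_le_iff]
      by (auto intro!: arccos_lbound arccos_ubound)
  next
    case False
    then have pos: "0 < a" "0 < b" "0 < c" using ab bc by auto
    show ?thesis
    proof (rule unit_gram_arccos_triangle)
      fix s t k
      have "0 \<le> (s / sqrt a)^2 * a + (t / sqrt b)^2 * b + (k / sqrt c)^2 * c
          + 2 * (s / sqrt a) * (t / sqrt b) * p + 2 * (t / sqrt b) * (k / sqrt c) * q
          + 2 * (s / sqrt a) * (k / sqrt c) * r"
        by (rule psd)
      then show "0 \<le> s^2 + t^2 + k^2 + 2 * s * t * (p / (sqrt a * sqrt b))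
          + 2 * t * k * (q / (sqrt b * sqrt c)) + 2 * s * k * (r / (sqrt a * sqrt c))"
        using pos by (simp add: power_divide)
    qed
  qed
qed

lemma integrable_L2_inner:
  assumes "x \<in> L2" "y \<in> L2"
  shows "integrable lborel (\<lambda>t. x t \<bullet> y t)"
proof (rule Bochner_Integration.integrable_bound)
  show "integrable lborel (\<lambda>t. (norm (x t))^2 + (norm (y t))^2)"
    using assms by (simp add: L2_def)
  show "(\<lambda>t. x t \<bullet> y t) \<in> borel_measurable lborel"
    using assms unfolding L2_def by (intro borel_measurable_inner) auto
  have "\<bar>x t \<bullet> y t\<bar> \<le> (norm (x t))^2 + (norm (y t))^2" for t
    using Cauchy_Schwarz_ineq2[of "x t" "y t"] sum_squares_bound[of "norm (x t)" "norm (y t)"]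
      mult_nonneg_nonneg[of "norm (x t)" "norm (y t)"] by simp
  then show "AE t in lborel. norm (x t \<bullet> y t) \<le> norm ((norm (x t))^2 + (norm (y t))^2)"
    by simp
qed

lemma L2_gram_psd:
  assumes x: "x \<in> L2" and y: "y \<in> L2" and z: "z \<in> L2"
  shows "0 \<le> s^2 * L2_inner x x + t^2 * L2_inner y y + k^2 * L2_inner z z
     + 2 * s * t * L2_inner x y + 2 * t * k * L2_inner y z + 2 * s * k * L2_inner x z"
proof -
  let ?e = "\<lambda>\<tau>. s *\<^sub>R x \<tau> + t *\<^sub>R y \<tau> + k *\<^sub>R z \<tau>"
  have expand: "?e \<tau> \<bullet> ?e \<tau>
     = s^2 * (x \<tau> \<bullet> x \<tau>) + t^2 * (y \<tau> \<bullet> y \<tau>) + k^2 * (z \<tau> \<bullet> z \<tau>)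
     + 2 * s * t * (x \<tau> \<bullet> y \<tau>) + 2 * t * k * (y \<tau> \<bullet> z \<tau>) + 2 * s * k * (x \<tau> \<bullet> z \<tau>)" for \<tau>
    by (simp add: inner_add_left inner_add_right inner_commute power2_eq_square algebra_simps)
  have "0 \<le> (LINT \<tau>|lborel. ?e \<tau> \<bullet> ?e \<tau>)"
    by (rule integral_nonneg_AE) simp
  also have "\<dots> = s^2 * L2_inner x x + t^2 * L2_inner y y + k^2 * L2_inner z z
     + 2 * s * t * L2_inner x y + 2 * t * k * L2_inner y z + 2 * s * k * L2_inner x z"
    unfolding expand L2_inner_def
    using integrable_L2_inner[OF x x] integrable_L2_inner[OF y y] integrable_L2_inner[OF z z]
      integrable_L2_inner[OF x y] integrable_L2_inner[OF y z] integrable_L2_inner[OF x z]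
    by simp
  finally show ?thesis .
qed

lemma gen_angle_nonneg:
  assumes "M u \<in> L2" "M' v \<in> L2"
  shows "0 \<le> gen_angle M M' u v"
proof -
  have "0 \<le> s^2 * L2_inner (M u) (M u) + 2 * s * k * L2_inner (M u) (M' v)
      + k^2 * L2_inner (M' v) (M' v)" for s k
    using L2_gram_psd[OF assms(1,2,2), of s k 0] by (simp add: algebra_simps)
  from abs_divide_sqrt_mult_le_1[OF nonneg_quadratic_form_coeffs[OF this], unfolded abs_le_iff]
  show ?thesis
    unfolding gen_angle_def L2_norm_def by (auto intro: arccos_lbound)
qed

lemma gen_angle_triangle:
  assumes "M1 u \<in> L2" "M2 v \<in> L2" "M3 w \<in> L2" and "L2_norm v \<noteq> 0"
  shows "gen_angle M1 M3 u w \<le> gen_angle M1 M2 u v + gen_angle M2 M3 v w"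
proof (cases "L2_norm u = 0 \<or> L2_norm w = 0")
  case True
  then show ?thesis
    using gen_angle_nonneg[of M1 u M2 v] gen_angle_nonneg[of M2 v M3 w] assms(1-3)
    by (auto simp: gen_angle_def)
next
  case False
  then show ?thesis
    using gram_arccos_triangle[OF L2_gram_psd[OF assms(1-3)]] assms(4)
    by (simp add: gen_angle_def L2_norm_def[of "M1 u"] L2_norm_def[of "M2 v"] L2_norm_def[of "M3 w"])
qed

lemma lin_bdd_inv_op_in_L2:
  assumes "lin_bdd_inv_op M" "u \<in> L2plus"
  shows "M u \<in> L2"
  using assms unfolding lin_bdd_inv_op_def L2_op_def L2plus_def by blast

theorem lemma4:
  fixes M1 M2 M3 :: "(real \<Rightarrow> real^'n) \<Rightarrow> (real \<Rightarrow> real^'n)"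
    and u v w :: "real \<Rightarrow> real^'n"
  assumes "lin_bdd_inv_op M1" and "lin_bdd_inv_op M2" and "lin_bdd_inv_op M3"
    and "u \<in> L2plus" and "w \<in> L2plus"
    and "v \<in> L2plus" and "L2_norm v \<noteq> 0"
  shows "gen_angle M1 M3 u w \<le> gen_angle M1 M2 u v + gen_angle M2 M3 v w"
  using assms by (intro gen_angle_triangle lin_bdd_inv_op_in_L2)

end
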